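(* For $i\in\{1,2\}$ let $\Psi_i=[A_i,B_i,C_i,D_i]\in\mathcal{RH}_\infty^{m_i\times k_i}$ with $A_1\in\mathbb{R}^{n_1\times n_1}$, $A_2\in\mathbb{R}^{n_2\times n_2}$, and let $M\in\mathbb{R}^{m_1\times m_2}$. Assume $\Psi_1^*(\zeta)M\Psi_2(\zeta)=0$ for all $\zeta\in\partial\mathbb D$, and that $(A_1,B_1)$ and $(A_2,B_2)$ are controllable. Then there exists $Z_{12}\in\mathbb{R}^{n_1\times n_2}$ such that $$\begin{pmatrix}A_1^\top Z_{12}A_2-Z_{12} & A_1^\top Z_{12}B_2\\ B_1^\top Z_{12}A_2 & B_1^\top Z_{12}B_2\end{pmatrix}=\begin{pmatrix}C_1&D_1\end{pmatrix}^\top M\begin{pmatrix}C_2&D_2\end{pmatrix}.$$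
   Context: $[A,B,C,D](\zeta)=C(\zeta I-A)^{-1}B+D$. $\mathcal{RH}_\infty$ here means the realization matrix $A$ has all eigenvalues in the open unit disc $\mathbb D$. $\Psi^*(\zeta)=\Psi(\zeta^{-1})^\top$; $\partial\mathbb D$ is the unit circle. *)

theory Defs
  imports "HOL-Analysis.Analysis"
begin

definition cmat :: "real^'n^'m \<Rightarrow> complex^'n^'m" where
  "cmat X = (\<chi> i j. complex_of_real (X $ i $ j))"

definition tf :: "real^'n^'n \<Rightarrow> real^'k^'n \<Rightarrow> real^'n^'m \<Rightarrow> real^'k^'m
                  \<Rightarrow> complex \<Rightarrow> complex^'k^'m" where
  "tf A B C D z =
     cmat C ** matrix_inv (mat z - cmat A) ** cmat B + cmat D"

definition schur_stable :: "real^'n^'n \<Rightarrow> bool" where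
  "schur_stable A \<longleftrightarrow> (\<forall>z::complex. det (mat z - cmat A) = 0 \<longrightarrow> cmod z < 1)"

fun mpow :: "real^'n^'n \<Rightarrow> nat \<Rightarrow> real^'n^'n" where
  "mpow A 0 = mat 1"
| "mpow A (Suc j) = A ** mpow A j"

definition controllable :: "real^'n^'n \<Rightarrow> real^'k^'n \<Rightarrow> bool" where
  "controllable A B \<longleftrightarrow>
     span {column i (mpow A j ** B) | i j. j < CARD('n)} = UNIV"

end

(*
  Because A1 and A2 are Schur stable, the Stein equation A1' Z A2 - Z = C1' M C2 has a
  solution Z. For this Z, Psi1*(z) M Psi2(z) equals G + B1' (z^-1 - A1')^-1 E + F (z - A2)^-1 B2,
  where E, F and G are the defects of the three remaining block equations. At the N-th roots of
  unity both resolvents become finite geometric sums up to an error governed by A1^N and A2^N;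
  comparing Fourier coefficients and letting N tend to infinity shows that all the Markov
  parameters B1' (A1')^n E and F A2^n B2 vanish. Controllability then forces E = 0 and F = 0,
  and z = 1 gives G = 0.
*)
theory Submission
  imports Defs "Jordan_Normal_Form.Spectral_Radius"
begin

hide_const (open) Matrix.mat Matrix.vec Determinant.det
hide_fact (open) Matrix.vec_eq_iff
no_notation Matrix.vec_index (infixl \<open>$\<close> 100)

section \<open>Matrix algebra\<close>

fun matpow :: "'a::semiring_1^'n^'n \<Rightarrow> nat \<Rightarrow> 'a^'n^'n" where
  "matpow A 0 = mat 1"
| "matpow A (Suc k) = A ** matpow A k"

lemma mpow_eq_matpow: "mpow = matpow"
proof (intro ext)
  show "mpow A k = matpow A k" for A :: "real^'n^'n" and k
    by (induction k) simp_all
qed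

lemma matpow_Suc': "matpow A (Suc k) = matpow A k ** A"
  by (induction k) (simp_all add: matrix_mul_assoc)

lemma matpow_transpose:
  "matpow (transpose A) k = transpose (matpow (A::'a::comm_semiring_1^'n^'n) k)"
proof (induction k)
  case (Suc k)
  have "matpow (transpose A) (Suc k) = transpose (matpow A k ** A)"
    by (simp add: Suc matrix_transpose_mul)
  then show ?case
    by (simp only: matpow_Suc')
qed simp

definition mat_scale :: "'a::times \<Rightarrow> 'a^'n^'m \<Rightarrow> 'a^'n^'m" where
  "mat_scale c X = (\<chi> i j. c * X $ i $ j)"

lemma mat_scale_nth [simp]: "mat_scale c X $ i $ j = c * X $ i $ j"
  by (simp add: mat_scale_def)

lemma mat_scale_mult_left: "mat_scale (c::'a::comm_semiring_1) X ** Y = mat_scale c (X ** Y)"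
  by (simp add: vec_eq_iff matrix_matrix_mult_def sum_distrib_left mult.assoc)

lemma mult_mat_scale_right: "X ** mat_scale (c::'a::comm_semiring_1) Y = mat_scale c (X ** Y)"
  by (simp add: vec_eq_iff matrix_matrix_mult_def sum_distrib_left mult_ac)

lemma mat_mult_eq_mat_scale: "mat (c::'a::comm_semiring_1) ** X = mat_scale c X"
  by (simp add: vec_eq_iff matrix_matrix_mult_def Finite_Cartesian_Product.mat_def
      if_distrib if_distribR sum.delta cong: if_cong)

lemma mult_mat_eq_mat_scale: "X ** mat (c::'a::comm_semiring_1) = mat_scale c X"
  by (simp add: vec_eq_iff matrix_matrix_mult_def Finite_Cartesian_Product.mat_def
      if_distrib if_distribR sum.delta' mult.commute cong: if_cong)

lemma mat_scale_mat_scale [simp]: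
  "mat_scale c (mat_scale d X) = mat_scale (c * d) (X::'a::semigroup_mult^'n^'m)"
  by (simp add: vec_eq_iff mult.assoc)

lemma mat_scale_1 [simp]: "mat_scale 1 (X::'a::monoid_mult^'n^'m) = X"
  by (simp add: vec_eq_iff)

lemma mat_scale_mat_1: "mat_scale c (mat 1) = mat (c::'a::semiring_1)"
  by (simp add: vec_eq_iff Finite_Cartesian_Product.mat_def)

lemma mat_scale_diff: "mat_scale (c::'a::ring) (X - Y) = mat_scale c X - mat_scale c Y"
  by (simp add: vec_eq_iff right_diff_distrib)

lemma mat_scale_mult_vector: "mat_scale (c::'a::comm_semiring_1) X *v w = c *s (X *v w)"
  by (simp add: vec_eq_iff matrix_vector_mult_def sum_distrib_left mult.assoc)

lemma matpow_mat_scale: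
  "matpow (mat_scale c A) k = mat_scale (c ^ k) (matpow (A::'a::comm_semiring_1^'n^'n) k)"
  by (induction k) (simp_all add: mat_scale_mult_left mult_mat_scale_right mult.commute)

lemma matrix_add_rdistrib: "(B + C) ** (A::'a::semiring_1^_^_) = B ** A + C ** A"
  by (simp add: vec_eq_iff matrix_matrix_mult_def sum.distrib distrib_right)

lemma matrix_diff_ldistrib: "(A::'a::ring_1^_^_) ** (B - C) = A ** B - A ** C"
  by (metis add_diff_cancel diff_add_cancel matrix_add_ldistrib)

lemma matrix_diff_rdistrib: "(B - C) ** (A::'a::ring_1^_^_) = B ** A - C ** A"
  by (metis add_diff_cancel diff_add_cancel matrix_add_rdistrib)

lemma matrix_neg_left: "(- A) ** (B::'a::ring_1^_^_) = - (A ** B)"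
  by (simp add: vec_eq_iff matrix_matrix_mult_def sum_negf)

lemma matrix_neg_right: "(A::'a::ring_1^_^_) ** (- B) = - (A ** B)"
  by (simp add: vec_eq_iff matrix_matrix_mult_def sum_negf)

lemma matrix_sum_left: "(\<Sum>k\<in>S. F k) ** (Y::'a::semiring_1^_^_) = (\<Sum>k\<in>S. F k ** Y)"
  by (induction S rule: infinite_finite_induct) (simp_all add: matrix_add_rdistrib)

lemma matrix_sum_right: "(Y::'a::semiring_1^_^_) ** (\<Sum>k\<in>S. F k) = (\<Sum>k\<in>S. Y ** F k)"
  by (induction S rule: infinite_finite_induct) (simp_all add: matrix_add_ldistrib)

lemma mult_mat_scale_sum_entry:
  "((b::'a::comm_semiring_1^'n^'m) ** (\<Sum>k\<in>S. mat_scale (a k) (P k)) ** e) $ p $ q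
    = (\<Sum>k\<in>S. a k * (b ** P k ** e) $ p $ q)"
proof -
  have "b ** (\<Sum>k\<in>S. mat_scale (a k) (P k)) ** e
      = (\<Sum>k\<in>S. mat_scale (a k) (b ** P k ** e))"
    by (simp add: matrix_sum_right matrix_sum_left mult_mat_scale_right mat_scale_mult_left)
  then show ?thesis
    by simp
qed

lemma column_mult: "Y *v column i X = column i (Y ** X)"
  by (simp add: vec_eq_iff matrix_vector_mult_def matrix_matrix_mult_def column_def)

lemma matrix_transpose_add: "transpose (A + B) = transpose A + transpose B"
  by (simp add: transpose_def vec_eq_iff)

lemma matrix_transpose_diff: "transpose ((A::'a::ab_group_add^_^_) - B) = transpose A - transpose B"
  by (simp add: transpose_def vec_eq_iff)

lemma matrix_transpose_zero [simp]: "transpose 0 = (0::'a::zero^'n^'m)"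
  by (simp add: transpose_def vec_eq_iff)

lemma invertible_matrix_inv:
  assumes "invertible (A::'a::semiring_1^'n^'m)"
  shows "A ** matrix_inv A = mat 1" "matrix_inv A ** A = mat 1"
  using someI_ex[OF assms[unfolded invertible_def]] unfolding matrix_inv_def by auto

lemma matrix_inv_unique:
  assumes "invertible (A::'a::semiring_1^'n^'n)" "Y ** A = mat 1"
  shows "matrix_inv A = Y"
  by (metis assms invertible_matrix_inv(1) matrix_mul_assoc matrix_mul_lid matrix_mul_rid)

lemma invertible_transpose:
  "invertible (A::'a::comm_semiring_1^'n^'n) \<Longrightarrow> invertible (transpose A)"
  unfolding invertible_def by (metis matrix_transpose_mul transpose_mat)

lemma transpose_matrix_inv:
  assumes "invertible (A::'a::comm_ring_1^'n^'n)"
  shows "transpose (matrix_inv A) = matrix_inv (transpose A)"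
  using invertible_transpose[OF assms]
  by (rule matrix_inv_unique[symmetric])
    (metis invertible_matrix_inv(1)[OF assms] matrix_transpose_mul transpose_mat)

lemma cmat_mult: "cmat (X ** Y) = cmat X ** cmat Y"
  by (simp add: cmat_def vec_eq_iff matrix_matrix_mult_def)

lemma cmat_diff: "cmat (X - Y) = cmat X - cmat Y"
  by (simp add: cmat_def vec_eq_iff)

lemma cmat_transpose: "cmat (transpose X) = transpose (cmat X)"
  by (simp add: cmat_def vec_eq_iff transpose_def)

lemma cmat_eq_iff [simp]: "cmat X = cmat Y \<longleftrightarrow> X = Y"
  by (simp add: cmat_def vec_eq_iff)

lemma cmat_zero [simp]: "cmat 0 = 0"
  by (simp add: cmat_def vec_eq_iff)

lemma cmat_eq_0_iff [simp]: "cmat X = 0 \<longleftrightarrow> X = 0"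
  by (metis cmat_eq_iff cmat_zero)

lemma cmat_matpow: "cmat (matpow A k) = matpow (cmat A) k"
proof (induction k)
  case 0
  then show ?case
    by (simp add: cmat_def vec_eq_iff Finite_Cartesian_Product.mat_def)
qed (simp add: cmat_mult)

section \<open>An entrywise matrix norm\<close>

definition mnorm :: "'a::real_normed_algebra_1^'n^'m \<Rightarrow> real" where
  "mnorm X = (\<Sum>i\<in>UNIV. \<Sum>j\<in>UNIV. norm (X $ i $ j))"

lemma mnorm_nonneg: "0 \<le> mnorm X"
  by (simp add: mnorm_def sum_nonneg)

lemma norm_entry_le_mnorm: "norm (X $ i $ j) \<le> mnorm X"
proof -
  have "norm (X $ i $ j) \<le> (\<Sum>j\<in>UNIV. norm (X $ i $ j))"
    by (rule member_le_sum) auto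
  also have "\<dots> \<le> mnorm X"
    unfolding mnorm_def by (rule member_le_sum) (auto intro: sum_nonneg)
  finally show ?thesis .
qed

lemma mnorm_le_zero_iff [simp]: "mnorm X \<le> 0 \<longleftrightarrow> X = 0"
proof
  assume "mnorm X \<le> 0"
  then have "norm (X $ i $ j) = 0" for i j
    using norm_entry_le_mnorm[of X i j] norm_ge_zero[of "X $ i $ j"] by linarith
  then show "X = 0"
    by (simp add: vec_eq_iff)
qed (simp add: mnorm_def)

lemma mnorm_mult: "mnorm ((X::'a::real_normed_algebra_1^'n^'m) ** Y) \<le> mnorm X * mnorm Y"
proof -
  have row: "(\<Sum>j\<in>UNIV. norm (Y $ k $ j)) \<le> mnorm Y" for k
    unfolding mnorm_def by (rule member_le_sum) (auto intro: sum_nonneg)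
  have "mnorm (X ** Y)
      \<le> (\<Sum>i\<in>UNIV. \<Sum>j\<in>UNIV. \<Sum>k\<in>UNIV. norm (X $ i $ k) * norm (Y $ k $ j))"
    unfolding mnorm_def matrix_matrix_mult_def vec_lambda_beta
    by (intro sum_mono order.trans[OF norm_sum sum_mono[OF norm_mult_ineq]])
  also have "\<dots> = (\<Sum>i\<in>UNIV. \<Sum>k\<in>UNIV. norm (X $ i $ k) * (\<Sum>j\<in>UNIV. norm (Y $ k $ j)))"
    by (simp add: sum_distrib_left) (rule sum.cong[OF refl], rule sum.swap)
  also have "\<dots> \<le> (\<Sum>i\<in>UNIV. \<Sum>k\<in>UNIV. norm (X $ i $ k) * mnorm Y)"
    by (auto intro!: sum_mono mult_left_mono row)
  also have "\<dots> = mnorm X * mnorm Y"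
    by (simp add: mnorm_def sum_distrib_right)
  finally show ?thesis .
qed

lemma mnorm_mult3:
  "mnorm ((X::'a::real_normed_algebra_1^_^_) ** Y ** Z) \<le> mnorm X * mnorm Y * mnorm Z"
  by (meson mnorm_nonneg mnorm_mult mult_right_mono order_trans)

lemma mnorm_triangle: "mnorm (X + Y) \<le> mnorm X + mnorm Y"
proof -
  have "mnorm (X + Y) \<le> (\<Sum>i\<in>UNIV. \<Sum>j\<in>UNIV. norm (X $ i $ j) + norm (Y $ i $ j))"
    unfolding mnorm_def by (intro sum_mono) (simp add: norm_triangle_ineq)
  then show ?thesis
    by (simp add: mnorm_def sum.distrib)
qed

lemma mnorm_minus [simp]: "mnorm (- X) = mnorm X"
  by (simp add: mnorm_def)

lemma mnorm_cmat [simp]: "mnorm (cmat X) = mnorm X"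
  by (simp add: mnorm_def cmat_def)

lemma mnorm_le_card_bound:
  assumes "\<And>i j. norm (X $ i $ j) \<le> c"
  shows "mnorm (X::'a::real_normed_algebra_1^'n^'m) \<le> real CARD('m) * real CARD('n) * c"
proof -
  have "mnorm X \<le> (\<Sum>i\<in>(UNIV::'m set). \<Sum>j\<in>(UNIV::'n set). c)"
    unfolding mnorm_def by (intro sum_mono assms)
  then show ?thesis
    by (simp add: mult_ac)
qed

lemma invertible_one_minus_small:
  fixes Y :: "'a::{real_normed_algebra_1,field}^'n^'n"
  assumes "mnorm Y < 1"
  shows "invertible (mat 1 - Y)"
proof -
  have "x = 0" if "(mat 1 - Y) *v x = 0" for x
  proof -
    let ?X = "columnvector x :: 'a^1^'n"
    have "x = Y *v x"
      using that by (simp add: matrix_vector_mult_diff_rdistrib)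
    then have "?X = Y ** ?X"
      by (metis dot_rowvector_columnvector)
    then have "mnorm ?X \<le> mnorm Y * mnorm ?X"
      by (metis mnorm_mult)
    then have "mnorm ?X \<le> 0"
      using assms mnorm_nonneg[of ?X] mult_strict_right_mono[OF assms, of "mnorm ?X"]
      by (cases "mnorm ?X = 0") auto
    then show "x = 0"
      by (simp add: columnvector_def vec_eq_iff)
  qed
  then obtain B where "B ** (mat 1 - Y) = mat 1"
    using matrix_left_invertible_ker[of "mat 1 - Y"] by auto
  then show ?thesis
    unfolding invertible_def using matrix_left_right_inverse by blast
qed

lemma neumann_solution:
  fixes Y :: "'a::{real_normed_algebra_1,field}^'n^'n"
  assumes "mnorm Y \<le> 1/2"
  obtains x where "(mat 1 - Y) ** x = e" "mnorm x \<le> 2 * mnorm e"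
    "mnorm (x - e) \<le> 2 * mnorm Y * mnorm e"
proof
  have inv: "invertible (mat 1 - Y)"
    using assms by (intro invertible_one_minus_small) simp
  define x where "x = matrix_inv (mat 1 - Y) ** e"
  show eq: "(mat 1 - Y) ** x = e"
    by (simp add: x_def matrix_mul_assoc invertible_matrix_inv(1)[OF inv])
  have "x - e = x - (mat 1 - Y) ** x"
    by (simp add: eq)
  also have "\<dots> = Y ** x"
    by (simp add: matrix_diff_rdistrib)
  finally have diff: "mnorm (x - e) \<le> mnorm Y * mnorm x"
    by (simp add: mnorm_mult)
  have "mnorm x \<le> mnorm e + mnorm (x - e)"
    using mnorm_triangle[of e "x - e"] by simp
  also have "\<dots> \<le> mnorm e + 1/2 * mnorm x"
    using diff mult_right_mono[OF assms mnorm_nonneg[of x]] by linarith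
  finally show bound: "mnorm x \<le> 2 * mnorm e"
    by simp
  show "mnorm (x - e) \<le> 2 * mnorm Y * mnorm e"
    using diff mult_left_mono[OF bound mnorm_nonneg[of Y]] by simp
qed

section \<open>Transfer to Jordan normal form matrices\<close>

definition from_index :: "nat \<Rightarrow> 'n::finite" where
  "from_index = (SOME f. bij_betw f {0..<CARD('n)} UNIV)"

lemma bij_from_index: "bij_betw (from_index :: nat \<Rightarrow> 'n::finite) {0..<CARD('n)} UNIV"
proof -
  have "\<exists>f. bij_betw f {0..<card (UNIV::'n set)} (UNIV::'n set)"
    by (rule ex_bij_betw_nat_finite) simp
  then show ?thesis
    unfolding from_index_def by (rule someI_ex)
qed

definition to_index :: "'n::finite \<Rightarrow> nat" where
  "to_index = the_inv_into {0..<CARD('n)} from_index"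

lemma to_index_less: "to_index (i::'n::finite) < CARD('n)"
  unfolding to_index_def using bij_from_index[where 'n='n]
  by (metis atLeastLessThan_iff bij_betw_def iso_tuple_UNIV_I the_inv_into_into subsetI)

lemma from_to_index [simp]: "from_index (to_index (i::'n::finite)) = i"
  unfolding to_index_def using bij_from_index[where 'n='n]
  by (metis bij_betw_def f_the_inv_into_f iso_tuple_UNIV_I)

lemma to_from_index [simp]: "k < CARD('n) \<Longrightarrow> to_index (from_index k :: 'n::finite) = k"
  unfolding to_index_def using bij_from_index[where 'n='n]
  by (simp add: bij_betw_def the_inv_into_f_f)

lemma sum_from_index:
  "(\<Sum>k\<in>{0..<CARD('n)}. g (from_index k :: 'n::finite)) = (\<Sum>i\<in>UNIV. g i)"
  by (rule sum.reindex_bij_betw[OF bij_from_index])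

definition to_jnf :: "'a^'n^'n \<Rightarrow> 'a mat" where
  "to_jnf X = Matrix.mat CARD('n) CARD('n) (\<lambda>(i, j). X $ from_index i $ from_index j)"

definition to_jnf_vec :: "'a^'n \<Rightarrow> 'a Matrix.vec" where
  "to_jnf_vec w = Matrix.vec CARD('n) (\<lambda>i. w $ from_index i)"

definition of_jnf_vec :: "'a Matrix.vec \<Rightarrow> 'a^'n::finite" where
  "of_jnf_vec v = (\<chi> i. vec_index v (to_index i))"

lemma to_jnf_carrier: "to_jnf (X::'a^'n^'n) \<in> carrier_mat CARD('n) CARD('n)"
  by (simp add: to_jnf_def)

lemma to_jnf_dim [simp]:
  "dim_row (to_jnf (X::'a^'n^'n)) = CARD('n)" "dim_col (to_jnf X) = CARD('n)"
  by (simp_all add: to_jnf_def)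

lemma to_jnf_entry: "to_jnf X $$ (to_index i, to_index j) = X $ i $ j"
  by (simp add: to_jnf_def to_index_less)

lemma to_jnf_mult: "to_jnf ((X::'a::semiring_1^'n^'n) ** Y) = to_jnf X * to_jnf Y"
  by (rule eq_matI) (auto simp: to_jnf_def matrix_matrix_mult_def scalar_prod_def
      sum_from_index[where g="\<lambda>l. X $ from_index _ $ l * Y $ l $ from_index _"])

lemma to_jnf_one: "to_jnf (mat 1 :: 'a::zero_neq_one^'n^'n) = 1\<^sub>m CARD('n)"
  by (rule eq_matI) (auto simp: to_jnf_def Finite_Cartesian_Product.mat_def, metis to_from_index)

lemma to_jnf_matpow: "to_jnf (matpow (X::'a::semiring_1^'n^'n) k) = to_jnf X ^\<^sub>m k"
  by (induction k)
    (simp_all add: to_jnf_one matpow_Suc' to_jnf_mult to_jnf_carrier del: matpow.simps(2))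

lemma to_jnf_vec_carrier: "to_jnf_vec (w::'a^'n) \<in> carrier_vec CARD('n)"
  by (simp add: to_jnf_vec_def)

lemma to_jnf_vec_mult:
  "to_jnf_vec ((X::'a::semiring_1^'n^'n) *v w) = to_jnf X *\<^sub>v to_jnf_vec w"
  by (rule eq_vecI) (auto simp: to_jnf_def to_jnf_vec_def matrix_vector_mult_def scalar_prod_def
      sum_from_index[where g="\<lambda>l. X $ from_index _ $ l * w $ l"])

lemma to_jnf_vec_scale: "to_jnf_vec (e *s (w::'a::times^'n)) = e \<cdot>\<^sub>v to_jnf_vec w"
  by (rule eq_vecI) (auto simp: to_jnf_vec_def)

lemma of_to_jnf_vec [simp]: "of_jnf_vec (to_jnf_vec (w::'a^'n)) = w"
  by (simp add: of_jnf_vec_def to_jnf_vec_def vec_eq_iff to_index_less)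

lemma to_of_jnf_vec: "v \<in> carrier_vec CARD('n) \<Longrightarrow> to_jnf_vec (of_jnf_vec v :: 'a^'n) = v"
  by (rule eq_vecI) (auto simp: of_jnf_vec_def to_jnf_vec_def)

lemma to_jnf_vec_eq_zero_iff: "to_jnf_vec (w::'a::zero^'n) = 0\<^sub>v CARD('n) \<longleftrightarrow> w = 0"
proof
  assume "to_jnf_vec w = 0\<^sub>v CARD('n)"
  then have "vec_index (to_jnf_vec w) (to_index i) = 0" for i :: 'n
    by (simp add: to_index_less)
  then show "w = 0"
    by (simp add: to_jnf_vec_def to_index_less vec_eq_iff)
qed (auto simp: to_jnf_vec_def)

lemma eigenvalue_to_jnf_iff:
  "eigenvalue (to_jnf (X::'a::comm_ring_1^'n^'n)) e \<longleftrightarrow> (\<exists>w. w \<noteq> 0 \<and> X *v w = e *s w)"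
proof
  assume "eigenvalue (to_jnf X) e"
  then obtain v where v: "v \<in> carrier_vec CARD('n)" "v \<noteq> 0\<^sub>v CARD('n)"
    "to_jnf X *\<^sub>v v = e \<cdot>\<^sub>v v"
    unfolding eigenvalue_def eigenvector_def by auto
  let ?w = "of_jnf_vec v :: 'a^'n"
  have "to_jnf_vec (X *v ?w) = to_jnf_vec (e *s ?w)"
    by (simp add: to_jnf_vec_mult to_jnf_vec_scale to_of_jnf_vec v)
  then have "X *v ?w = e *s ?w"
    by (metis of_to_jnf_vec)
  moreover have "?w \<noteq> 0"
    using v to_jnf_vec_eq_zero_iff to_of_jnf_vec by metis
  ultimately show "\<exists>w. w \<noteq> 0 \<and> X *v w = e *s w"
    by blast
next
  assume "\<exists>w. w \<noteq> 0 \<and> X *v w = e *s w"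
  then obtain w where "w \<noteq> 0" "X *v w = e *s w"
    by blast
  then show "eigenvalue (to_jnf X) e"
    unfolding eigenvalue_def eigenvector_def
    by (intro exI[of _ "to_jnf_vec w"])
      (auto simp: to_jnf_vec_carrier to_jnf_vec_eq_zero_iff to_jnf_vec_scale
        simp flip: to_jnf_vec_mult)
qed

lemma spectral_radius_to_jnf_less:
  fixes X :: "complex^'n^'n"
  assumes "\<And>e w. w \<noteq> 0 \<Longrightarrow> X *v w = e *s w \<Longrightarrow> cmod e < r"
  shows "spectral_radius (to_jnf X) < r"
proof -
  have "spectral_radius (to_jnf X) \<in> norm ` spectrum (to_jnf X)"
    by (rule spectral_radius_mem_max(1)[OF to_jnf_carrier]) simp
  then obtain e w where "spectral_radius (to_jnf X) = cmod e" "w \<noteq> 0" "X *v w = e *s w"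
    unfolding spectrum_def eigenvalue_to_jnf_iff by blast
  then show ?thesis
    using assms by simp
qed

section \<open>Powers of Schur stable matrices and the Stein equation\<close>

lemma eigenvector_imp_det_zero:
  fixes X :: "'a::field^'n^'n"
  assumes "X *v w = e *s w" "w \<noteq> 0"
  shows "det (mat e - X) = 0"
proof -
  have "mat e *v w = e *s w"
    by (simp add: vec_eq_iff matrix_vector_mult_def Finite_Cartesian_Product.mat_def
        if_distrib if_distribR sum.delta cong: if_cong)
  then have "(mat e - X) *v w = 0"
    using assms(1) by (simp add: matrix_vector_mult_diff_rdistrib)
  then have "\<not> inj ((*v) (mat e - X))"
    using assms(2) by (metis inj_eq matrix_vector_mult_0_right)
  then show ?thesis
    using inj_matrix_vector_mult invertible_det_nz by blast
qed

lemma matpow_geometric_decay: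
  fixes X :: "complex^'n^'n"
  assumes "\<And>e w. w \<noteq> 0 \<Longrightarrow> X *v w = e *s w \<Longrightarrow> cmod e < 1"
  shows "\<exists>r c. 0 < r \<and> r < 1 \<and> (\<forall>k i j. cmod (matpow X k $ i $ j) \<le> c * r ^ k)"
proof -
  define \<rho> where "\<rho> = spectral_radius (to_jnf X)"
  have "\<rho> \<in> norm ` spectrum (to_jnf X)"
    unfolding \<rho>_def by (rule spectral_radius_mem_max(1)[OF to_jnf_carrier]) simp
  moreover have "\<rho> < 1"
    unfolding \<rho>_def using assms by (rule spectral_radius_to_jnf_less)
  ultimately have "0 \<le> \<rho>" "\<rho> < 1"
    by auto
  define r where "r = (1 + \<rho>) / 2"
  have r: "0 < r" "r < 1" "\<rho> < r"
    using \<open>0 \<le> \<rho>\<close> \<open>\<rho> < 1\<close> by (simp_all add: r_def)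
  \<comment> \<open>Rescaling by \<open>r\<close>, which lies between the spectral radius and 1, turns the
    boundedness of powers into decay like \<open>r ^ k\<close>.\<close>
  define Y where "Y = mat_scale (inverse (complex_of_real r)) X"
  have "spectral_radius (to_jnf Y) < 1"
  proof (rule spectral_radius_to_jnf_less)
    fix e w
    assume w: "w \<noteq> 0" "Y *v w = e *s w"
    have "X *v w = complex_of_real r *s (Y *v w)"
      using r(1) by (simp add: Y_def mat_scale_mult_vector vector_smult_assoc)
    also have "\<dots> = (complex_of_real r * e) *s w"
      by (simp only: w(2) vector_smult_assoc)
    finally have "eigenvalue (to_jnf X) (complex_of_real r * e)"
      unfolding eigenvalue_to_jnf_iff using w(1) by blast
    then have "r * cmod e \<le> \<rho>"
      unfolding \<rho>_def using spectral_radius_mem_max(2)[OF to_jnf_carrier] r(1)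
      by (force simp: spectrum_def norm_mult)
    then have "r * cmod e < r * 1"
      using r by linarith
    then show "cmod e < 1"
      using r(1) by (simp only: mult_less_cancel_left_pos)
  qed
  then obtain c where c: "\<And>k. norm_bound (to_jnf Y ^\<^sub>m k) c"
    using spectral_radius_jnf_norm_bound_less_1_upper_triangular[OF to_jnf_carrier] by blast
  have "cmod (matpow X k $ i $ j) \<le> c * r ^ k" for k i j
  proof -
    have "norm (to_jnf (matpow Y k) $$ (to_index i, to_index j)) \<le> c"
      using c[of k] to_index_less[of i] to_index_less[of j]
      unfolding norm_bound_def to_jnf_matpow[symmetric] by simp
    moreover have "cmod (matpow Y k $ i $ j) = cmod (matpow X k $ i $ j) / r ^ k"
      using r(1) by (simp add: Y_def matpow_mat_scale norm_mult norm_power norm_inverse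
          power_inverse divide_inverse mult.commute)
    ultimately show ?thesis
      using r(1) by (simp add: to_jnf_entry divide_le_eq)
  qed
  with r show ?thesis
    by blast
qed

lemma schur_stable_mnorm_matpow_tendsto_zero:
  fixes A :: "real^'n^'n"
  assumes "schur_stable A"
  shows "(\<lambda>k. mnorm (matpow A k)) \<longlonglongrightarrow> 0"
    and "(\<lambda>k. mnorm (matpow (cmat A) k)) \<longlonglongrightarrow> 0"
proof -
  have eig: "cmod e < 1" if "w \<noteq> 0" "cmat A *v w = e *s w" for e w
    using assms eigenvector_imp_det_zero[OF that(2,1)] unfolding schur_stable_def by blast
  have "\<exists>r c. 0 < r \<and> r < 1 \<and> (\<forall>k i j. cmod (matpow (cmat A) k $ i $ j) \<le> c * r ^ k)"
    by (rule matpow_geometric_decay) (rule eig)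
  then obtain r c where r: "0 < r" "r < 1"
    and c: "\<And>k i j. cmod (matpow (cmat A) k $ i $ j) \<le> c * r ^ k"
    by blast
  have bound: "norm (mnorm (matpow A k)) \<le> real CARD('n) * real CARD('n) * (c * r ^ k)" for k
    using mnorm_le_card_bound[OF c[of k]] by (simp add: mnorm_nonneg flip: cmat_matpow)
  have "(\<lambda>k. real CARD('n) * real CARD('n) * (c * r ^ k)) \<longlonglongrightarrow> 0"
    using r by (intro tendsto_mult_right_zero tendsto_mult_left_zero LIMSEQ_power_zero) auto
  then show "(\<lambda>k. mnorm (matpow A k)) \<longlonglongrightarrow> 0"
    by (rule Lim_null_comparison[OF always_eventually[OF allI[OF bound]]])
  then show "(\<lambda>k. mnorm (matpow (cmat A) k)) \<longlonglongrightarrow> 0"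
    by (simp flip: cmat_matpow)
qed

lemma schur_stable_transpose:
  assumes "schur_stable A"
  shows "schur_stable (transpose A)"
proof -
  have "mat z - cmat (transpose A) = transpose (mat z - cmat A)" for z
    by (simp add: cmat_transpose matrix_transpose_diff)
  then show ?thesis
    using assms unfolding schur_stable_def by (simp add: det_transpose)
qed

lemma schur_stable_invertible:
  assumes "schur_stable A" "cmod z = 1"
  shows "invertible (mat z - cmat A)"
  using assms invertible_det_nz unfolding schur_stable_def by force

lemma stein_equation_solvable:
  fixes A1 :: "real^'n1^'n1" and A2 :: "real^'n2^'n2" and X :: "real^'n2^'n1"
  assumes stable1: "schur_stable A1" and stable2: "schur_stable A2"
  shows "\<exists>Z. transpose A1 ** Z ** A2 - Z = X"
proof -
  define L where "L Z = transpose A1 ** Z ** A2 - Z" for Z :: "real^'n2^'n1"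
  have lin: "linear L"
    by (rule linearI) (simp_all add: L_def matrix_add_ldistrib matrix_add_rdistrib
        matrix_scalar_ac scalar_matrix_assoc scaleR_right_diff_distrib)
  have "Z = 0" if "L Z = 0" for Z
  proof -
    have fixed: "transpose A1 ** Z ** A2 = Z"
      using that by (simp add: L_def)
    have invariant: "matpow (transpose A1) k ** Z ** matpow A2 k = Z" for k
    proof (induction k)
      case (Suc k)
      have "matpow (transpose A1) (Suc k) ** Z ** matpow A2 (Suc k)
          = matpow (transpose A1) k ** (transpose A1 ** Z ** A2) ** matpow A2 k"
        by (simp only: matpow_Suc'[of "transpose A1"] matpow.simps(2)[of A2] matrix_mul_assoc)
      then show ?case
        by (simp only: fixed Suc)
    qed simp
    have "mnorm Z \<le> mnorm (matpow (transpose A1) k) * mnorm Z * mnorm (matpow A2 k)" for k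
      using mnorm_mult3[of "matpow (transpose A1) k" Z "matpow A2 k"] by (simp only: invariant)
    moreover have "(\<lambda>k. mnorm (matpow (transpose A1) k) * mnorm Z * mnorm (matpow A2 k))
        \<longlonglongrightarrow> 0 * mnorm Z * 0"
      by (intro tendsto_mult tendsto_const schur_stable_mnorm_matpow_tendsto_zero
          schur_stable_transpose stable1 stable2)
    ultimately have "mnorm Z \<le> 0"
      by (intro tendsto_lowerbound[OF _ always_eventually]) auto
    then show "Z = 0"
      by simp
  qed
  then have "inj L"
    using linear_inj_iff_eq_0[OF lin] by blast
  then have "surj L"
    by (rule linear_injective_imp_surjective[OF lin]) (rule refl)
  then obtain Z where "L Z = X"
    using surjD[of L X] by metis
  then show ?thesis
    unfolding L_def by blast
qed

section \<open>Roots of unity and resolvents\<close>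

definition unit_root :: "nat \<Rightarrow> nat \<Rightarrow> complex" where
  "unit_root N j = exp (2 * of_real pi * \<i> * of_nat j / of_nat N)"

lemma unit_root_pow: "unit_root N j ^ m = unit_root N (j * m)"
proof -
  have "unit_root N j ^ m = exp (of_nat m * (2 * of_real pi * \<i> * of_nat j / of_nat N))"
    unfolding unit_root_def by (rule exp_of_nat_mult[symmetric])
  then show ?thesis
    by (simp add: unit_root_def mult_ac)
qed

lemma unit_root_pow_self: "N \<noteq> 0 \<Longrightarrow> unit_root N j ^ N = 1"
  unfolding unit_root_def by (rule complex_root_unity)

lemma sum_unit_root_pow:
  assumes "N \<ge> 1"
  shows "(\<Sum>j<N. unit_root N j ^ m) = (if N dvd m then of_nat N else 0)"
proof -
  have sum: "(\<Sum>j<N. unit_root N j ^ m) = (\<Sum>j<N. unit_root N m ^ j)"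
    by (simp add: unit_root_pow mult.commute)
  have one: "unit_root N m = 1 \<longleftrightarrow> N dvd m"
    unfolding unit_root_def using assms by (rule complex_root_unity_eq_1)
  show ?thesis
  proof (cases "N dvd m")
    case False
    then have "(\<Sum>j<N. unit_root N m ^ j) = (unit_root N m ^ N - 1) / (unit_root N m - 1)"
      using one by (intro geometric_sum) simp
    then show ?thesis
      using False assms by (simp add: sum unit_root_pow_self)
  next
    case True
    then have "unit_root N m = 1"
      using one by simp
    then show ?thesis
      using True by (simp add: sum)
  qed
qed

lemma sum_unit_root_weighted:
  assumes "N \<ge> 1" "finite K"
  shows "(\<Sum>j<N. unit_root N j ^ a * (\<Sum>k\<in>K. unit_root N j ^ d k * U k))
    = of_nat N * sum U {k \<in> K. N dvd a + d k}"
proof -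
  have "(\<Sum>j<N. unit_root N j ^ a * (\<Sum>k\<in>K. unit_root N j ^ d k * U k))
      = (\<Sum>k\<in>K. U k * (\<Sum>j<N. unit_root N j ^ (a + d k)))"
    by (simp add: sum_distrib_left sum_distrib_right power_add mult_ac sum.swap[of _ K])
  also have "\<dots> = (\<Sum>k\<in>K. if N dvd a + d k then of_nat N * U k else 0)"
    using assms(1) by (intro sum.cong) (simp_all add: sum_unit_root_pow)
  also have "\<dots> = of_nat N * sum U {k \<in> K. N dvd a + d k}"
    using assms(2) by (simp add: sum.inter_filter sum_distrib_left if_distrib cong: if_cong)
  finally show ?thesis .
qed

lemma dvd_iff_eq_below_double:
  fixes x N :: nat
  assumes "0 < x" "x < 2 * N"
  shows "N dvd x \<longleftrightarrow> x = N"
proof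
  assume "N dvd x"
  then obtain q where q: "x = N * q"
    by (auto simp: dvd_def)
  have "0 < q"
    using assms(1) q by (cases q) auto
  moreover have "N * q < N * 2"
    using assms(2) q by (simp add: mult.commute)
  ultimately have "q = 1"
    by simp
  with q show "x = N"
    by simp
qed simp

lemma root_of_unity_coefficient:
  fixes U V :: "nat \<Rightarrow> complex"
  assumes n: "n + 2 \<le> N"
    and zero: "\<And>z. z ^ N = 1 \<Longrightarrow>
      g + (\<Sum>k<N. z ^ (k + 1) * U k) + (\<Sum>k<N. z ^ (N - 1 - k) * V k) = 0"
  shows "U n + V (N - 2 - n) = 0"
proof -
  \<comment> \<open>Weighting by \<open>z ^ a\<close> and summing over all \<open>N\<close>-th roots of unity
    keeps exactly the terms whose total exponent is a multiple of \<open>N\<close>.\<close>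
  define a where "a = N - n - 1"
  define \<omega> where "\<omega> = unit_root N"
  have N: "N \<ge> 1"
    using n by simp
  have "\<not> N dvd a"
    using n by (intro nat_dvd_not_less) (auto simp: a_def)
  then have sum_g: "(\<Sum>j<N. \<omega> j ^ a * g) = 0"
    using N by (simp add: \<omega>_def sum_unit_root_pow flip: sum_distrib_right)
  have "N dvd a + (k + 1) \<longleftrightarrow> k = n" if "k < N" for k
    using that n by (subst dvd_iff_eq_below_double) (auto simp: a_def)
  then have "{k \<in> {..<N}. N dvd a + (k + 1)} = {n}"
    using n by auto
  then have sum_U: "(\<Sum>j<N. \<omega> j ^ a * (\<Sum>k<N. \<omega> j ^ (k + 1) * U k)) = of_nat N * U n"
    unfolding \<omega>_def sum_unit_root_weighted[OF N finite_lessThan] by simp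
  have dvd_iff: "N dvd a + (N - 1 - k) \<longleftrightarrow> k = N - 2 - n" if "k < N" for k
    using that n by (subst dvd_iff_eq_below_double) (auto simp: a_def)
  then have "{k \<in> {..<N}. N dvd a + (N - 1 - k)} = {N - 2 - n}"
    using n dvd_iff[of "N - 2 - n"] by auto
  then have sum_V: "(\<Sum>j<N. \<omega> j ^ a * (\<Sum>k<N. \<omega> j ^ (N - 1 - k) * V k))
      = of_nat N * V (N - 2 - n)"
    unfolding \<omega>_def sum_unit_root_weighted[OF N finite_lessThan] by simp
  have "g + (\<Sum>k<N. \<omega> j ^ (k + 1) * U k) + (\<Sum>k<N. \<omega> j ^ (N - 1 - k) * V k) = 0" for j
    using N by (intro zero) (simp add: \<omega>_def unit_root_pow_self)
  then have "(\<Sum>j<N. \<omega> j ^ a * g) + (\<Sum>j<N. \<omega> j ^ a * (\<Sum>k<N. \<omega> j ^ (k + 1) * U k))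
      + (\<Sum>j<N. \<omega> j ^ a * (\<Sum>k<N. \<omega> j ^ (N - 1 - k) * V k)) = 0"
    by (simp only: distrib_left[symmetric] sum.distrib[symmetric] mult_zero_right sum.neutral_const)
  then have "of_nat N * (U n + V (N - 2 - n)) = 0"
    by (simp only: sum_g sum_U sum_V distrib_left add_0)
  then show ?thesis
    using N by simp
qed

lemma inverse_power_root_of_unity:
  fixes z :: complex
  assumes "z ^ N = 1" "k < N"
  shows "inverse z ^ (N - 1 - k) = z ^ (k + 1)"
proof -
  have "k + 1 + (N - 1 - k) = N"
    using assms(2) by simp
  then have "z ^ (k + 1) * z ^ (N - 1 - k) = 1"
    using assms(1) by (metis power_add)
  moreover have "z \<noteq> 0"
    using assms by (metis power_0_left zero_neq_one less_nat_zero_code not_gr_zero)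
  ultimately show ?thesis
    by (simp add: power_inverse field_simps)
qed

lemma mat_minus_mult_geometric_sum:
  fixes A :: "'a::comm_ring_1^'n^'n"
  shows "(mat u - A) ** (\<Sum>k<N. mat_scale (u ^ (N - 1 - k)) (matpow A k))
    = mat (u ^ N) - matpow A N"
proof -
  define f where "f k = mat_scale (u ^ (N - k)) (matpow A k)" for k
  have "(mat u - A) ** mat_scale (u ^ (N - 1 - k)) (matpow A k) = f k - f (Suc k)"
    if "k < N" for k
  proof -
    have "(mat u - A) ** mat_scale (u ^ (N - 1 - k)) (matpow A k)
        = mat_scale (u * u ^ (N - 1 - k)) (matpow A k)
          - mat_scale (u ^ (N - 1 - k)) (A ** matpow A k)"
      by (simp add: matrix_diff_rdistrib mat_mult_eq_mat_scale mult_mat_scale_right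
          mat_scale_diff mult_ac)
    also have "\<dots> = f k - f (Suc k)"
      using that by (simp add: f_def Suc_diff_Suc flip: power_Suc)
    finally show ?thesis .
  qed
  then have "(mat u - A) ** (\<Sum>k<N. mat_scale (u ^ (N - 1 - k)) (matpow A k))
      = (\<Sum>k<N. f k - f (Suc k))"
    by (simp add: matrix_sum_right)
  also have "\<dots> = f 0 - f N"
    by (rule sum_lessThan_telescope')
  also have "\<dots> = mat (u ^ N) - matpow A N"
    by (simp add: f_def mat_scale_mat_1)
  finally show ?thesis .
qed

lemma resolvent_at_root_of_unity:
  fixes A :: "'a::comm_ring_1^'n^'n"
  assumes inv: "invertible (mat u - A)" and "u ^ N = 1"
  shows "matrix_inv (mat u - A) ** (mat 1 - matpow A N)
    = (\<Sum>k<N. mat_scale (u ^ (N - 1 - k)) (matpow A k))"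
proof -
  have "(mat u - A) ** (\<Sum>k<N. mat_scale (u ^ (N - 1 - k)) (matpow A k)) = mat 1 - matpow A N"
    using mat_minus_mult_geometric_sum[of u A N] assms(2) by simp
  then have "matrix_inv (mat u - A) ** (mat 1 - matpow A N)
      = (matrix_inv (mat u - A) ** (mat u - A))
        ** (\<Sum>k<N. mat_scale (u ^ (N - 1 - k)) (matpow A k))"
    by (simp only: matrix_mul_assoc[symmetric])
  then show ?thesis
    by (simp only: invertible_matrix_inv(2)[OF inv] matrix_mul_lid)
qed

section \<open>Vanishing of the Markov parameters\<close>

lemma truncated_resolvent_identity:
  fixes Ap :: "complex^'n^'n" and Aq :: "complex^'p^'p" and b :: "complex^'n^'k"
    and e :: "complex^'l^'n" and f :: "complex^'p^'k" and c :: "complex^'l^'p"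
    and g :: "complex^'l^'k"
  assumes inv_p: "\<And>z. cmod z = 1 \<Longrightarrow> invertible (mat z - Ap)"
    and inv_q: "\<And>z. cmod z = 1 \<Longrightarrow> invertible (mat z - Aq)"
    and zero: "\<And>z. cmod z = 1 \<Longrightarrow>
      g + b ** matrix_inv (mat (inverse z) - Ap) ** e + f ** matrix_inv (mat z - Aq) ** c = 0"
    and n: "n + 2 \<le> N"
    and e': "(mat 1 - matpow Ap N) ** e' = e" and c': "(mat 1 - matpow Aq N) ** c' = c"
  shows "b ** matpow Ap n ** e' + f ** matpow Aq (N - 2 - n) ** c' = 0"
proof -
  \<comment> \<open>With \<open>e'\<close> and \<open>c'\<close> in place of \<open>e\<close> and \<open>c\<close>, both resolvents
    become finite geometric sums at the \<open>N\<close>-th roots of unity.\<close>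
  have "g $ p $ q + (\<Sum>k<N. z ^ (k + 1) * (b ** matpow Ap k ** e') $ p $ q)
      + (\<Sum>k<N. z ^ (N - 1 - k) * (f ** matpow Aq k ** c') $ p $ q) = 0"
    if zN: "z ^ N = 1" for z p q
  proof -
    have z: "cmod z = 1"
      using power_eq_1_iff[OF zN] n by auto
    have z': "cmod (inverse z) = 1" "inverse z ^ N = 1"
      using z zN by (simp_all add: norm_inverse power_inverse)
    have "b ** matrix_inv (mat (inverse z) - Ap) ** e
        = b ** (matrix_inv (mat (inverse z) - Ap) ** (mat 1 - matpow Ap N)) ** e'"
      by (simp add: e'[symmetric] matrix_mul_assoc)
    also have "\<dots> = b ** (\<Sum>k<N. mat_scale (inverse z ^ (N - 1 - k)) (matpow Ap k)) ** e'"
      by (simp only: resolvent_at_root_of_unity[OF inv_p[OF z'(1)] z'(2)])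
    finally have "(b ** matrix_inv (mat (inverse z) - Ap) ** e) $ p $ q
        = (\<Sum>k<N. inverse z ^ (N - 1 - k) * (b ** matpow Ap k ** e') $ p $ q)"
      by (simp only: mult_mat_scale_sum_entry)
    also have "\<dots> = (\<Sum>k<N. z ^ (k + 1) * (b ** matpow Ap k ** e') $ p $ q)"
      by (rule sum.cong[OF refl]) (simp only: inverse_power_root_of_unity[OF zN] lessThan_iff)
    finally have p: "(b ** matrix_inv (mat (inverse z) - Ap) ** e) $ p $ q
        = (\<Sum>k<N. z ^ (k + 1) * (b ** matpow Ap k ** e') $ p $ q)" .
    have "f ** matrix_inv (mat z - Aq) ** c
        = f ** (matrix_inv (mat z - Aq) ** (mat 1 - matpow Aq N)) ** c'"
      by (simp add: c'[symmetric] matrix_mul_assoc)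
    also have "\<dots> = f ** (\<Sum>k<N. mat_scale (z ^ (N - 1 - k)) (matpow Aq k)) ** c'"
      by (simp only: resolvent_at_root_of_unity[OF inv_q[OF z] zN])
    finally have q: "(f ** matrix_inv (mat z - Aq) ** c) $ p $ q
        = (\<Sum>k<N. z ^ (N - 1 - k) * (f ** matpow Aq k ** c') $ p $ q)"
      by (simp only: mult_mat_scale_sum_entry)
    show ?thesis
      using arg_cong[OF zero[OF z], of "\<lambda>X. X $ p $ q"] by (simp add: p q)
  qed
  from root_of_unity_coefficient[OF n this]
  show ?thesis
    by (simp add: vec_eq_iff)
qed

lemma resolvent_coefficient_vanishes:
  fixes Ap :: "complex^'n^'n" and Aq :: "complex^'p^'p" and b :: "complex^'n^'k"
    and e :: "complex^'l^'n" and f :: "complex^'p^'k" and c :: "complex^'l^'p"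
    and g :: "complex^'l^'k"
  assumes inv_p: "\<And>z. cmod z = 1 \<Longrightarrow> invertible (mat z - Ap)"
    and inv_q: "\<And>z. cmod z = 1 \<Longrightarrow> invertible (mat z - Aq)"
    and zero: "\<And>z. cmod z = 1 \<Longrightarrow>
      g + b ** matrix_inv (mat (inverse z) - Ap) ** e + f ** matrix_inv (mat z - Aq) ** c = 0"
    and lim_p: "(\<lambda>k. mnorm (matpow Ap k)) \<longlonglongrightarrow> 0"
    and lim_q: "(\<lambda>k. mnorm (matpow Aq k)) \<longlonglongrightarrow> 0"
  shows "b ** matpow Ap n ** e = 0"
proof -
  define \<beta> where "\<beta> N = 2 * mnorm f * mnorm c * mnorm (matpow Aq (N - 2 - n))
    + 2 * mnorm (b ** matpow Ap n) * mnorm e * mnorm (matpow Ap N)" for N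
  have "eventually (\<lambda>N. mnorm (matpow Ap N) < 1/2) sequentially"
    "eventually (\<lambda>N. mnorm (matpow Aq N) < 1/2) sequentially"
    by (simp_all only: order_tendstoD(2)[OF lim_p] order_tendstoD(2)[OF lim_q]
        half_gt_zero_iff zero_less_one)
  then have "eventually (\<lambda>N. n + 2 \<le> N \<and> mnorm (matpow Ap N) \<le> 1/2
      \<and> mnorm (matpow Aq N) \<le> 1/2) sequentially"
    using eventually_ge_at_top[of "n + 2"] by eventually_elim auto
  then have "eventually (\<lambda>N. mnorm (b ** matpow Ap n ** e) \<le> \<beta> N) sequentially"
  proof (rule eventually_mono, elim conjE)
    fix N
    assume n: "n + 2 \<le> N" and small_p: "mnorm (matpow Ap N) \<le> 1/2"
      and small_q: "mnorm (matpow Aq N) \<le> 1/2"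
    obtain e' where e': "(mat 1 - matpow Ap N) ** e' = e"
      "mnorm (e' - e) \<le> 2 * mnorm (matpow Ap N) * mnorm e"
      using neumann_solution[OF small_p] by metis
    obtain c' where c': "(mat 1 - matpow Aq N) ** c' = c" "mnorm c' \<le> 2 * mnorm c"
      using neumann_solution[OF small_q] by metis
    have "b ** matpow Ap n ** e' + f ** matpow Aq (N - 2 - n) ** c' = 0"
      by (rule truncated_resolvent_identity[OF inv_p inv_q zero n e'(1) c'(1)])
    then have "b ** matpow Ap n ** e
        = - (f ** matpow Aq (N - 2 - n) ** c') - b ** matpow Ap n ** (e' - e)"
      by (simp add: matrix_diff_ldistrib eq_neg_iff_add_eq_0 algebra_simps)
    then have "mnorm (b ** matpow Ap n ** e)
        \<le> mnorm (f ** matpow Aq (N - 2 - n) ** c') + mnorm (b ** matpow Ap n ** (e' - e))"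
      by (metis diff_conv_add_uminus mnorm_minus mnorm_triangle)
    also have "\<dots> \<le> mnorm f * mnorm (matpow Aq (N - 2 - n)) * (2 * mnorm c)
        + mnorm (b ** matpow Ap n) * (2 * mnorm (matpow Ap N) * mnorm e)"
      by (intro add_mono order.trans[OF mnorm_mult3] order.trans[OF mnorm_mult] mult_left_mono
          c'(2) e'(2) mnorm_nonneg mult_nonneg_nonneg)
    also have "\<dots> = \<beta> N"
      by (simp add: \<beta>_def mult_ac)
    finally show "mnorm (b ** matpow Ap n ** e) \<le> \<beta> N" .
  qed
  moreover have "(\<lambda>N. mnorm (matpow Aq (N - (n + 2)))) \<longlonglongrightarrow> 0"
    by (rule filterlim_compose[OF lim_q filterlim_minus_const_nat_at_top])
  then have "\<beta> \<longlonglongrightarrow> 0"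
    unfolding \<beta>_def using lim_p
    by (auto intro!: tendsto_add_zero tendsto_mult_right_zero simp: add.commute)
  ultimately have "mnorm (b ** matpow Ap n ** e) \<le> 0"
    by (intro tendsto_lowerbound[of \<beta>]) auto
  then show ?thesis
    by simp
qed

lemma resolvent_coefficients_vanish:
  fixes Ap :: "complex^'n^'n" and Aq :: "complex^'p^'p" and b :: "complex^'n^'k"
    and e :: "complex^'l^'n" and f :: "complex^'p^'k" and c :: "complex^'l^'p"
    and g :: "complex^'l^'k"
  assumes inv_p: "\<And>z. cmod z = 1 \<Longrightarrow> invertible (mat z - Ap)"
    and inv_q: "\<And>z. cmod z = 1 \<Longrightarrow> invertible (mat z - Aq)"
    and zero: "\<And>z. cmod z = 1 \<Longrightarrow>
      g + b ** matrix_inv (mat (inverse z) - Ap) ** e + f ** matrix_inv (mat z - Aq) ** c = 0"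
    and lim_p: "(\<lambda>k. mnorm (matpow Ap k)) \<longlonglongrightarrow> 0"
    and lim_q: "(\<lambda>k. mnorm (matpow Aq k)) \<longlonglongrightarrow> 0"
  shows "b ** matpow Ap n ** e = 0" "f ** matpow Aq n ** c = 0"
proof -
  show "b ** matpow Ap n ** e = 0"
    by (rule resolvent_coefficient_vanishes[OF inv_p inv_q zero lim_p lim_q])
  \<comment> \<open>The substitution \<open>z := inverse z\<close> exchanges the two resolvents.\<close>
  have zero': "g + f ** matrix_inv (mat (inverse z) - Aq) ** c
      + b ** matrix_inv (mat z - Ap) ** e = 0" if "cmod z = 1" for z
    using zero[of "inverse z"] that by (simp add: norm_inverse add_ac)
  show "f ** matpow Aq n ** c = 0"
    by (rule resolvent_coefficient_vanishes[OF inv_q inv_p zero' lim_q lim_p])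
qed

section \<open>The transfer function identity\<close>

lemma resolvent_sandwich_identity:
  fixes T1 :: "'a::comm_ring_1^'n1^'n1" and A1 :: "'a^'n1^'n1"
    and R2 A2 :: "'a^'n2^'n2" and Z :: "'a^'n2^'n1"
    and B1 :: "'a^'n1^'k1" and C1 :: "'a^'m1^'n1" and D1 :: "'a^'m1^'k1"
    and M :: "'a^'m2^'m1" and C2 :: "'a^'n2^'m2" and B2 :: "'a^'k2^'n2" and D2 :: "'a^'k2^'m2"
  assumes T1: "T1 ** (mat w - A1) = mat 1" and R2: "(mat z - A2) ** R2 = mat 1"
    and wz: "w * z = 1" and stein: "A1 ** Z ** A2 - Z = C1 ** M ** C2"
  shows "(B1 ** T1 ** C1 + D1) ** M ** (C2 ** R2 ** B2 + D2) =
     (D1 ** M ** D2 - B1 ** Z ** B2) + B1 ** T1 ** (C1 ** M ** D2 - A1 ** Z ** B2)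
     + (D1 ** M ** C2 - B1 ** Z ** A2) ** R2 ** B2"
proof -
  have T1A1: "T1 ** A1 = mat_scale w T1 - mat 1"
    using T1 by (simp add: matrix_diff_ldistrib mult_mat_eq_mat_scale algebra_simps)
  have A2R2: "A2 ** R2 = mat_scale z R2 - mat 1"
    using R2 by (simp add: matrix_diff_rdistrib mat_mult_eq_mat_scale algebra_simps)
  have middle: "T1 ** (C1 ** M ** C2) ** R2 = - Z - T1 ** A1 ** Z - Z ** A2 ** R2"
  proof -
    have "T1 ** (C1 ** M ** C2) ** R2 = (T1 ** A1) ** Z ** (A2 ** R2) - T1 ** Z ** R2"
      by (simp add: stein[symmetric] matrix_diff_ldistrib matrix_diff_rdistrib matrix_mul_assoc)
    also have "\<dots> = (mat_scale w T1 - mat 1) ** Z ** (mat_scale z R2 - mat 1) - T1 ** Z ** R2"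
      by (simp only: T1A1 A2R2)
    also have "\<dots> = mat_scale (w * z) (T1 ** Z ** R2) - mat_scale w (T1 ** Z)
        - mat_scale z (Z ** R2) + Z - T1 ** Z ** R2"
      by (simp add: matrix_diff_ldistrib matrix_diff_rdistrib mat_scale_mult_left
          mult_mat_scale_right matrix_mul_assoc mat_scale_diff mult_ac algebra_simps)
    also have "\<dots> = Z - mat_scale w (T1 ** Z) - mat_scale z (Z ** R2)"
      by (simp add: wz)
    also have "mat_scale w (T1 ** Z) = T1 ** A1 ** Z + Z"
      by (simp add: T1A1 matrix_diff_rdistrib mat_scale_mult_left)
    also have "mat_scale z (Z ** R2) = Z ** A2 ** R2 + Z"
      by (simp add: A2R2 matrix_diff_ldistrib mult_mat_scale_right flip: matrix_mul_assoc)
    also have "Z - (T1 ** A1 ** Z + Z) - (Z ** A2 ** R2 + Z) = - Z - T1 ** A1 ** Z - Z ** A2 ** R2"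
      by (simp add: algebra_simps)
    finally show ?thesis .
  qed
  have "(B1 ** T1 ** C1 + D1) ** M ** (C2 ** R2 ** B2 + D2) =
     B1 ** (T1 ** (C1 ** M ** C2) ** R2) ** B2 + B1 ** T1 ** C1 ** M ** D2
     + D1 ** M ** C2 ** R2 ** B2 + D1 ** M ** D2"
    by (simp add: matrix_add_ldistrib matrix_add_rdistrib matrix_mul_assoc algebra_simps)
  also have "\<dots> = B1 ** (- Z - T1 ** A1 ** Z - Z ** A2 ** R2) ** B2 + B1 ** T1 ** C1 ** M ** D2
     + D1 ** M ** C2 ** R2 ** B2 + D1 ** M ** D2"
    by (simp only: middle)
  also have "\<dots> = (D1 ** M ** D2 - B1 ** Z ** B2) + B1 ** T1 ** (C1 ** M ** D2 - A1 ** Z ** B2)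
     + (D1 ** M ** C2 - B1 ** Z ** A2) ** R2 ** B2"
    by (simp add: matrix_diff_ldistrib matrix_diff_rdistrib matrix_neg_left matrix_neg_right
        matrix_add_ldistrib matrix_add_rdistrib matrix_mul_assoc algebra_simps)
  finally show ?thesis .
qed

lemma tf_product_decomposition:
  fixes A1 :: "real^'n1^'n1" and B1 :: "real^'k1^'n1"
    and C1 :: "real^'n1^'m1" and D1 :: "real^'k1^'m1"
    and A2 :: "real^'n2^'n2" and B2 :: "real^'k2^'n2"
    and C2 :: "real^'n2^'m2" and D2 :: "real^'k2^'m2"
    and M :: "real^'m2^'m1" and Z :: "real^'n2^'n1"
  assumes stable1: "schur_stable A1" and stable2: "schur_stable A2"
    and stein: "transpose A1 ** Z ** A2 - Z = transpose C1 ** M ** C2"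
    and z: "cmod z = 1"
  shows "transpose (tf A1 B1 C1 D1 (inverse z)) ** cmat M ** tf A2 B2 C2 D2 z =
    cmat (transpose D1 ** M ** D2 - transpose B1 ** Z ** B2)
    + cmat (transpose B1) ** matrix_inv (mat (inverse z) - cmat (transpose A1))
      ** cmat (transpose C1 ** M ** D2 - transpose A1 ** Z ** B2)
    + cmat (transpose D1 ** M ** C2 - transpose B1 ** Z ** A2)
      ** matrix_inv (mat z - cmat A2) ** cmat B2"
proof -
  define T1 where "T1 = matrix_inv (mat (inverse z) - cmat (transpose A1))"
  define R2 where "R2 = matrix_inv (mat z - cmat A2)"
  have z': "z \<noteq> 0" "cmod (inverse z) = 1"
    using z by (auto simp: norm_inverse)
  have inv1: "invertible (mat (inverse z) - cmat A1)"
    and inv1': "invertible (mat (inverse z) - cmat (transpose A1))"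
    and inv2: "invertible (mat z - cmat A2)"
    using schur_stable_invertible z'(2) z stable1 stable2 schur_stable_transpose by blast+
  have "transpose (matrix_inv (mat (inverse z) - cmat A1)) = T1"
    using transpose_matrix_inv[OF inv1] by (simp add: T1_def cmat_transpose matrix_transpose_diff)
  then have "transpose (tf A1 B1 C1 D1 (inverse z)) =
      cmat (transpose B1) ** T1 ** cmat (transpose C1) + cmat (transpose D1)"
    unfolding tf_def
    by (simp add: matrix_transpose_add matrix_transpose_mul cmat_transpose matrix_mul_assoc)
  moreover have "tf A2 B2 C2 D2 z = cmat C2 ** R2 ** cmat B2 + cmat D2"
    by (simp add: tf_def R2_def)
  moreover have "cmat (transpose A1) ** cmat Z ** cmat A2 - cmat Z
      = cmat (transpose C1) ** cmat M ** cmat C2"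
    using arg_cong[OF stein, of cmat] by (simp add: cmat_mult cmat_diff)
  ultimately show ?thesis
    using resolvent_sandwich_identity[of T1 "inverse z" "cmat (transpose A1)" z "cmat A2" R2]
      invertible_matrix_inv(2)[OF inv1'] invertible_matrix_inv(1)[OF inv2] z'(1)
    by (simp add: T1_def R2_def cmat_mult cmat_diff)
qed

section \<open>Controllability\<close>

lemma controllable_annihilator_zero:
  fixes A :: "real^'n^'n" and B :: "real^'k^'n" and Y :: "real^'n^'p"
  assumes ctrb: "controllable A B" and annihilates: "\<And>j. Y ** matpow A j ** B = 0"
  shows "Y = 0"
proof -
  let ?S = "{column i (mpow A j ** B) | i j. j < CARD('n)}"
  have "Y *v v = 0" if "v \<in> ?S" for v
  proof -
    from that obtain i j where "v = column i (matpow A j ** B)"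
      by (auto simp: mpow_eq_matpow)
    then have "Y *v v = column i (Y ** matpow A j ** B)"
      by (simp add: column_mult matrix_mul_assoc)
    then show ?thesis
      by (simp add: annihilates column_def vec_eq_iff)
  qed
  then have "Y *v x = 0" for x
    using ctrb linear_eq_0_on_span[OF matrix_vector_mul_linear[of Y], of ?S]
    unfolding controllable_def by blast
  then show ?thesis
    by (metis matrix_eq matrix_vector_mult_0)
qed

lemma controllable_dual_annihilator_zero:
  fixes A :: "real^'n^'n" and B :: "real^'k^'n" and Y :: "real^'p^'n"
  assumes ctrb: "controllable A B"
    and annihilates: "\<And>j. transpose B ** matpow (transpose A) j ** Y = 0"
  shows "Y = 0"
proof -
  have "transpose Y ** matpow A j ** B = 0" for j
    using arg_cong[OF annihilates[of j], of transpose]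
    by (simp add: matrix_transpose_mul matpow_transpose matrix_mul_assoc)
  then have "transpose Y = 0"
    by (rule controllable_annihilator_zero[OF ctrb])
  then show ?thesis
    by (metis Finite_Cartesian_Product.transpose_transpose matrix_transpose_zero)
qed

theorem lemmaA2:
  fixes A1 :: "real^'n1^'n1" and B1 :: "real^'k1^'n1"
    and C1 :: "real^'n1^'m1" and D1 :: "real^'k1^'m1"
    and A2 :: "real^'n2^'n2" and B2 :: "real^'k2^'n2"
    and C2 :: "real^'n2^'m2" and D2 :: "real^'k2^'m2"
    and M :: "real^'m2^'m1"
  assumes stab1: "schur_stable A1" and stab2: "schur_stable A2"
    and zero: "\<And>z. cmod z = 1 \<Longrightarrow>
        transpose (tf A1 B1 C1 D1 (inverse z)) ** cmat M ** tf A2 B2 C2 D2 z = 0"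
    and ctrb1: "controllable A1 B1" and ctrb2: "controllable A2 B2"
  shows "\<exists>Z :: real^'n2^'n1.
           transpose A1 ** Z ** A2 - Z = transpose C1 ** M ** C2 \<and>
           transpose A1 ** Z ** B2 = transpose C1 ** M ** D2 \<and>
           transpose B1 ** Z ** A2 = transpose D1 ** M ** C2 \<and>
           transpose B1 ** Z ** B2 = transpose D1 ** M ** D2"
proof -
  obtain Z where stein: "transpose A1 ** Z ** A2 - Z = transpose C1 ** M ** C2"
    using stein_equation_solvable[OF stab1 stab2] by blast
  define E where "E = transpose C1 ** M ** D2 - transpose A1 ** Z ** B2"
  define F where "F = transpose D1 ** M ** C2 - transpose B1 ** Z ** A2"
  define G where "G = transpose D1 ** M ** D2 - transpose B1 ** Z ** B2"
  have circle: "cmat G + cmat (transpose B1) ** matrix_inv (mat (inverse z) - cmat (transpose A1))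
      ** cmat E + cmat F ** matrix_inv (mat z - cmat A2) ** cmat B2 = 0" if "cmod z = 1" for z
    using zero[OF that] tf_product_decomposition[OF stab1 stab2 stein that, of B1 D1 B2 D2]
    by (simp add: E_def F_def G_def)
  note markov = resolvent_coefficients_vanish[OF
      schur_stable_invertible[OF schur_stable_transpose[OF stab1]]
      schur_stable_invertible[OF stab2] circle
      schur_stable_mnorm_matpow_tendsto_zero(2)[OF schur_stable_transpose[OF stab1]]
      schur_stable_mnorm_matpow_tendsto_zero(2)[OF stab2]]
  from markov(1) have "E = 0"
    by (intro controllable_dual_annihilator_zero[OF ctrb1]) (simp flip: cmat_mult cmat_matpow)
  moreover from markov(2) have "F = 0"
    by (intro controllable_annihilator_zero[OF ctrb2]) (simp flip: cmat_mult cmat_matpow)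
  moreover have "G = 0"
    using circle[of 1] calculation by simp
  ultimately show ?thesis
    using stein by (auto simp: E_def F_def G_def)
qed

end
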